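(* Fix an integer $d\geq 2$, a cost map $\mathcal{M}:[0,1]^d\to\mathbb{R}$ and points $S,T\in[0,1]^d$ such that $S\preceq_{\delta''}T$ for some constant $0<\delta''\leq 1$. Let $\vec\sigma^*$ be a robustly-optimal monotone path in $\Sigma(S,T)$ for $\langle\mathcal{M},S,T\rangle$. Let $\mathcal{G}_n=\mathcal{G}(\mathcal{X}_n\cup\{S,T\};r_n)$ be the random geometric graph with $r_n=f_n\left(\frac{\log n}{n}\right)^{1/d}$, where $f_n\to\infty$ as $n\to\infty$. Then, almost surely, $\mathcal{G}_n$ contains a monotone path $\vec\sigma_n\in\Sigma(S,T)$ such that $\mathcal{M}(\vec\sigma_n)=(1+o(1))\,\mathcal{M}(\vec\sigma^* )$.
   Context: Logarithms are natural. For $p=(p_1,\dots,p_d),p'=(p'_1,\dots,p'_d)\in\mathbb{R}^d$, $p\preceq p'$ means $p_i\leq p'_i$ for all $i$; for $\delta>0$, $p\preceq_\delta p'$ means $p\preceq p'$ and $\min_i(p'_i-p_i)=\delta$. A path is a continuous map $\sigma:[0,1]\to\mathbb{R}^d$, with image $\textup{Im}(\sigma)$; $\Sigma(S,T)$ is the set of continuous paths $\sigma:[0,1]\to[0,1]^d$ with $\sigma(0)=S,\sigma(1)=T$. A path is monotone if $\sigma(\tau)\preceq\sigma(\tau')$ whenever $0\le\tau\le\tau'\le1$. The bottleneck cost is $\mathcal{M}(\sigma)=\max_{\tau\in[0,1]}\mathcal{M}(\sigma(\tau))$. $\mathcal{B}_r(\sigma)$ is the union of Euclidean balls of radius $r$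 centered at points of $\textup{Im}(\sigma)$. A path $\sigma\in\Sigma(S,T)$ is robust if for every $\varepsilon>0$ there is $\delta>0$ with $\mathcal{M}(\sigma')\leq(1+\varepsilon)\mathcal{M}(\sigma)$ for every $\sigma'\in\Sigma(S,T)$ with $\textup{Im}(\sigma')\subset\mathcal{B}_\delta(\sigma)$; a robustly-optimal monotone path is a robust monotone path attaining the infimum cost over robust monotone paths. $\mathcal{X}_n$ consists of $n$ independent uniform points in $[0,1]^d$. $\mathcal{G}(V;r)$ is the directed graph on $V$ with edges $(x,y)$ for $x\neq y$, $\|x-y\|_2\leq r$, each edge viewed as the straight segment between its endpoints; a path in the graph is monotone if each traversed edge $(x,y)$ satisfies $x\preceq y$. An event holds almost surely (a.s.) if its probability tends to $1$ as $n\to\infty$. *)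

theory Defs
  imports "HOL-Probability.Probability"
begin

text \<open>Points of [0,1]^d are vectors of type real^'d; the dimension is d = CARD('d).\<close>

definition unit_cube :: "(real ^ 'd) set" where
  "unit_cube = {x. \<forall>i. 0 \<le> x $ i \<and> x $ i \<le> 1}"

definition prec :: "real ^ 'd \<Rightarrow> real ^ 'd \<Rightarrow> bool" where
  "prec p q \<longleftrightarrow> (\<forall>i. p $ i \<le> q $ i)"

definition prec_delta :: "real \<Rightarrow> real ^ 'd \<Rightarrow> real ^ 'd \<Rightarrow> bool" where
  "prec_delta \<delta> p q \<longleftrightarrow> prec p q \<and> Min (range (\<lambda>i. q $ i - p $ i)) = \<delta>"

definition paths_ST :: "real ^ 'd \<Rightarrow> real ^ 'd \<Rightarrow> (real \<Rightarrow> real ^ 'd) set" where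
  "paths_ST S T = {\<sigma>. continuous_on {0..1} \<sigma> \<and> \<sigma> ` {0..1} \<subseteq> unit_cube
                        \<and> \<sigma> 0 = S \<and> \<sigma> 1 = T}"

definition monotone_path :: "(real \<Rightarrow> real ^ 'd) \<Rightarrow> bool" where
  "monotone_path \<sigma> \<longleftrightarrow> (\<forall>\<tau> \<tau>'. 0 \<le> \<tau> \<and> \<tau> \<le> \<tau>' \<and> \<tau>' \<le> 1 \<longrightarrow> prec (\<sigma> \<tau>) (\<sigma> \<tau>'))"

definition set_cost :: "(real ^ 'd \<Rightarrow> real) \<Rightarrow> (real ^ 'd) set \<Rightarrow> ereal" where
  "set_cost M A = (SUP x\<in>A. ereal (M x))"

definition path_cost :: "(real ^ 'd \<Rightarrow> real) \<Rightarrow> (real \<Rightarrow> real ^ 'd) \<Rightarrow> ereal" where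
  "path_cost M \<sigma> = set_cost M (\<sigma> ` {0..1})"

definition tube :: "real \<Rightarrow> (real \<Rightarrow> real ^ 'd) \<Rightarrow> (real ^ 'd) set" where
  "tube r \<sigma> = (\<Union>x\<in>\<sigma> ` {0..1}. ball x r)"

definition robust_path :: "(real ^ 'd \<Rightarrow> real) \<Rightarrow> real ^ 'd \<Rightarrow> real ^ 'd \<Rightarrow> (real \<Rightarrow> real ^ 'd) \<Rightarrow> bool" where
  "robust_path M S T \<sigma> \<longleftrightarrow> \<sigma> \<in> paths_ST S T \<and>
     (\<forall>\<epsilon>>0. \<exists>\<delta>>0. \<forall>\<sigma>'\<in>paths_ST S T. \<sigma>' ` {0..1} \<subseteq> tube \<delta> \<sigma> \<longrightarrow>
         path_cost M \<sigma>' \<le> ereal (1 + \<epsilon>) * path_cost M \<sigma>)"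

definition robustly_optimal_monotone :: "(real ^ 'd \<Rightarrow> real) \<Rightarrow> real ^ 'd \<Rightarrow> real ^ 'd \<Rightarrow> (real \<Rightarrow> real ^ 'd) \<Rightarrow> bool" where
  "robustly_optimal_monotone M S T \<sigma> \<longleftrightarrow> robust_path M S T \<sigma> \<and> monotone_path \<sigma> \<and>
     path_cost M \<sigma> = (INF \<rho>\<in>{\<rho>. robust_path M S T \<rho> \<and> monotone_path \<rho>}. path_cost M \<rho>)"

definition graph_monotone_path :: "(real ^ 'd) set \<Rightarrow> real \<Rightarrow> real ^ 'd \<Rightarrow> real ^ 'd \<Rightarrow> (real ^ 'd) list \<Rightarrow> bool" where
  "graph_monotone_path V r S T vs \<longleftrightarrow> vs \<noteq> [] \<and> hd vs = S \<and> last vs = T \<and> set vs \<subseteq> V \<and>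
     (\<forall>i. Suc i < length vs \<longrightarrow>
        vs ! i \<noteq> vs ! Suc i \<and> norm (vs ! i - vs ! Suc i) \<le> r \<and> prec (vs ! i) (vs ! Suc i))"

definition polyline_image :: "(real ^ 'd) list \<Rightarrow> (real ^ 'd) set" where
  "polyline_image vs = set vs \<union> (\<Union>i\<in>{i. Suc i < length vs}. closed_segment (vs ! i) (vs ! Suc i))"

definition unif_cube :: "(real ^ 'd) measure" where
  "unif_cube = uniform_measure lborel unit_cube"

definition sample_space :: "nat \<Rightarrow> (nat \<Rightarrow> real ^ 'd) measure" where
  "sample_space n = PiM {..<n} (\<lambda>_. unif_cube)"

end

(*
  Robustness of the optimal path \<sigma>* yields a \<delta> > 0 such that every path from S to T inside
  the \<delta>-tube around \<sigma>* costs at most (1 + \<epsilon>) times the cost of \<sigma>*.  Cut [0,1]^d into m^d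
  open cubes of side 1/m.  Sampling \<sigma>* at equispaced levels of s + \<Sum>i. \<sigma>*(s)_i and pulling the
  samples slightly towards the segment from S to T, along which every coordinate grows by at
  least \<delta>'', gives a staircase whose points increase by at least 1/m in every coordinate and
  stay close to \<sigma>*.
  If every cube contains a sample point, replacing each staircase point by a sample point in
  its cube yields a monotone path of the geometric graph, with edges of length O(1/m), inside
  the tube.  For m of order C / r\<^sub>n a union bound shows that some cube is empty with
  probability at most m^d (1 - m^-d)^n \<le> 1/n, since r\<^sub>n^d n / ln n = f\<^sub>n^d \<rightarrow> \<infinity>.
*)

theory Submission
  imports Defs
begin

lemma unit_cube_eq_cbox: "(unit_cube :: (real^'d) set) = cbox 0 1"
  by (auto simp: unit_cube_def mem_box_cart)

lemma measure_lborel_box_cart: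
  fixes a b :: "real^'d"
  assumes "\<And>i. a $ i \<le> b $ i"
  shows "measure lborel (box a b) = (\<Prod>i\<in>UNIV. b $ i - a $ i)"
  using assms
  by (simp add: measure_lborel_box_eq Basis_vec_def inner_axis axis_eq_axis inner_diff_left
      prod.UNION_disjoint)

lemma sets_unit_cube: "unit_cube \<in> sets lborel"
  by (simp add: unit_cube_eq_cbox)

lemma emeasure_unit_cube: "emeasure lborel (unit_cube :: (real^'d) set) = 1"
  by (simp add: unit_cube_eq_cbox emeasure_lborel_cbox_eq Basis_vec_def inner_axis axis_eq_axis
      prod.UNION_disjoint)

lemma measure_unit_cube: "measure lborel (unit_cube :: (real^'d) set) = 1"
  by (simp add: measure_def emeasure_unit_cube)

lemma prob_space_unif_cube: "prob_space (unif_cube :: (real^'d) measure)"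
  unfolding unif_cube_def
  by (rule prob_space_uniform_measure) (simp_all add: emeasure_unit_cube sets_unit_cube)

lemma prob_space_sample_space: "prob_space (sample_space n :: (nat \<Rightarrow> real^'d) measure)"
  unfolding sample_space_def by (intro prob_space_PiM prob_space_unif_cube)

lemma measure_unif_cube:
  assumes "B \<in> sets lborel" "B \<subseteq> unit_cube"
  shows "measure (unif_cube :: (real^'d) measure) B = measure lborel B"
  using assms unfolding unif_cube_def
  by (subst measure_uniform_measure) (auto simp: Int_absorb1 measure_unit_cube emeasure_unit_cube)

lemma sample_space_avoiding:
  fixes B :: "(real^'d) set"
  assumes B: "B \<in> sets lborel" "B \<subseteq> unit_cube"
  shows sets_sample_space_avoiding:
      "{\<omega> \<in> space (sample_space n). \<forall>i<n. \<omega> i \<notin> B} \<in> sets (sample_space n)"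
    and measure_sample_space_avoiding:
      "measure (sample_space n) {\<omega> \<in> space (sample_space n). \<forall>i<n. \<omega> i \<notin> B}
           = (1 - measure lborel B) ^ n"
proof -
  interpret U: prob_space "unif_cube :: (real^'d) measure" by (rule prob_space_unif_cube)
  interpret P: prob_space "sample_space n :: (nat \<Rightarrow> real^'d) measure"
    by (rule prob_space_sample_space)
  have sets_U: "sets (unif_cube :: (real^'d) measure) = sets lborel"
    by (simp add: unif_cube_def)
  have avoid_eq: "{\<omega> \<in> space (sample_space n). \<forall>i<n. \<omega> i \<notin> B} = (\<Pi>\<^sub>E i\<in>{..<n}. - B)"
    by (auto simp: sample_space_def space_PiM unif_cube_def PiE_def Pi_def)
  have compl: "- B \<in> U.events" using B by (simp add: sets_U Compl_eq_Diff_UNIV)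
  have prob_compl: "U.prob (- B) = 1 - measure lborel B"
    using U.prob_compl[of B] B measure_unif_cube[OF B]
    by (simp add: sets_U Compl_eq_Diff_UNIV, simp add: unif_cube_def)
  show "{\<omega> \<in> space (sample_space n). \<forall>i<n. \<omega> i \<notin> B} \<in> sets (sample_space n)"
    using compl unfolding sample_space_def avoid_eq[unfolded sample_space_def]
    by (intro sets_PiM_I_finite) auto
  have "emeasure (sample_space n) (\<Pi>\<^sub>E i\<in>{..<n}. - B) = (\<Prod>i<n. emeasure unif_cube (- B))"
    unfolding sample_space_def using compl
    by (intro product_sigma_finite.emeasure_PiM)
       (auto simp: product_sigma_finite_def U.sigma_finite_measure_axioms)
  also have "\<dots> = ennreal ((1 - measure lborel B) ^ n)"
    using measure_nonneg[of unif_cube "- B"]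
    by (simp add: U.emeasure_eq_measure prob_compl prod_ennreal ennreal_power)
  finally show "measure (sample_space n) {\<omega> \<in> space (sample_space n). \<forall>i<n. \<omega> i \<notin> B}
           = (1 - measure lborel B) ^ n"
    unfolding avoid_eq P.emeasure_eq_measure using measure_nonneg[of unif_cube "- B"] prob_compl
    by simp
qed

definition grid_cells :: "nat \<Rightarrow> ('d::finite \<Rightarrow> nat) set" where
  "grid_cells m = {j. \<forall>i. j i < m}"

definition grid_cell :: "nat \<Rightarrow> ('d \<Rightarrow> nat) \<Rightarrow> (real^'d) set" where
  "grid_cell m j = box (\<chi> i. real (j i) / real m) (\<chi> i. (real (j i) + 1) / real m)"

definition covers_grid :: "nat \<Rightarrow> (real^'d) set \<Rightarrow> bool" where
  "covers_grid m V \<longleftrightarrow> (\<forall>j\<in>grid_cells m. V \<inter> grid_cell m j \<noteq> {})"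

lemma card_grid_cells: "card (grid_cells m :: ('d::finite \<Rightarrow> nat) set) = m ^ CARD('d)"
  and finite_grid_cells: "finite (grid_cells m :: ('d::finite \<Rightarrow> nat) set)"
proof -
  have "grid_cells m = (\<Pi>\<^sub>E i\<in>(UNIV :: 'd set). {..<m})"
    by (auto simp: grid_cells_def PiE_def Pi_def extensional_def)
  then show "card (grid_cells m :: ('d \<Rightarrow> nat) set) = m ^ CARD('d)"
    and "finite (grid_cells m :: ('d \<Rightarrow> nat) set)"
    by (simp_all add: card_PiE finite_PiE)
qed

lemma grid_cell_subset_unit_cube:
  assumes "j \<in> grid_cells m"
  shows "grid_cell m j \<subseteq> unit_cube"
proof
  fix x assume x: "x \<in> grid_cell m j"
  show "x \<in> unit_cube" unfolding unit_cube_def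
  proof (intro CollectI allI conjI)
    fix i
    have "j i + 1 \<le> m"
      using assms by (simp add: grid_cells_def Suc_le_eq)
    then have m: "real (j i) + 1 \<le> real m"
      by (metis of_nat_1 of_nat_add of_nat_le_iff)
    have "real (j i) / real m < x $ i" "x $ i < (real (j i) + 1) / real m"
      using x by (auto simp: grid_cell_def mem_box_cart)
    moreover have "0 \<le> real (j i) / real m" "(real (j i) + 1) / real m \<le> 1"
      using m by (simp_all add: divide_le_eq_1)
    ultimately show "0 \<le> x $ i" "x $ i \<le> 1"
      by linarith+
  qed
qed

lemma measure_grid_cell: "measure lborel (grid_cell m j :: (real^'d) set) = (1 / real m) ^ CARD('d)"
proof -
  have "measure lborel (grid_cell m j :: (real^'d) set) = (\<Prod>i\<in>(UNIV :: 'd set). 1 / real m)"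
    unfolding grid_cell_def
    by (subst measure_lborel_box_cart) (auto simp: divide_right_mono add_divide_distrib)
  then show ?thesis by simp
qed

definition grid_covering_event :: "nat \<Rightarrow> nat \<Rightarrow> (nat \<Rightarrow> real^'d) set" where
  "grid_covering_event n m = {\<omega> \<in> space (sample_space n). covers_grid m (\<omega> ` {..<n})}"

lemma grid_covering_event:
  shows sets_grid_covering_event:
      "(grid_covering_event n m :: (nat \<Rightarrow> real^'d) set) \<in> sets (sample_space n)"
    and measure_grid_covering_event:
      "1 - real m ^ CARD('d) * (1 - (1 / real m) ^ CARD('d)) ^ n
         \<le> measure (sample_space n) (grid_covering_event n m :: (nat \<Rightarrow> real^'d) set)"
proof -
  interpret P: prob_space "sample_space n :: (nat \<Rightarrow> real^'d) measure"
    by (rule prob_space_sample_space)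
  define miss where "miss j = {\<omega> \<in> space (sample_space n). \<forall>i<n. \<omega> i \<notin> grid_cell m j}"
    for j :: "'d \<Rightarrow> nat"
  have miss: "miss j \<in> P.events" "P.prob (miss j) = (1 - (1 / real m) ^ CARD('d)) ^ n"
    if "j \<in> grid_cells m" for j
  proof -
    have "grid_cell m j \<in> sets lborel" "grid_cell m j \<subseteq> unit_cube"
      using grid_cell_subset_unit_cube[OF that] by (simp_all add: grid_cell_def)
    from sample_space_avoiding[OF this, of n]
    show "miss j \<in> P.events" "P.prob (miss j) = (1 - (1 / real m) ^ CARD('d)) ^ n"
      by (simp_all only: miss_def measure_grid_cell)
  qed
  have event_eq: "grid_covering_event n m = space (sample_space n) - (\<Union>j\<in>grid_cells m. miss j)"
    by (auto simp: grid_covering_event_def covers_grid_def miss_def)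
  have misses: "(\<Union>j\<in>grid_cells m. miss j) \<in> P.events"
    using miss(1) finite_grid_cells by (intro sets.finite_UN) auto
  then show "grid_covering_event n m \<in> P.events"
    unfolding event_eq by (rule sets.compl_sets)
  have "P.prob (\<Union>j\<in>grid_cells m. miss j) \<le> (\<Sum>j\<in>grid_cells m. P.prob (miss j))"
    using miss finite_grid_cells by (intro P.finite_measure_subadditive_finite) auto
  also have "\<dots> = (\<Sum>j :: 'd \<Rightarrow> nat\<in>grid_cells m. (1 - (1 / real m) ^ CARD('d)) ^ n)"
    using miss(2) by (rule sum.cong[OF refl])
  also have "\<dots> = real m ^ CARD('d) * (1 - (1 / real m) ^ CARD('d)) ^ n"
    by (simp add: card_grid_cells)
  finally show "1 - real m ^ CARD('d) * (1 - (1 / real m) ^ CARD('d)) ^ n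
      \<le> P.prob (grid_covering_event n m)"
    unfolding event_eq using P.prob_compl[OF misses] by simp
qed

lemma mult_one_minus_inverse_power_le:
  fixes M :: real and n :: nat
  assumes M: "1 \<le> M" and n: "2 \<le> n" and ln_le: "2 * ln (real n) \<le> real n / M"
  shows "M * (1 - 1 / M) ^ n \<le> 1 / real n"
proof -
  have "(1 - 1 / M) ^ n \<le> exp (- 1 / M) ^ n"
    using M exp_ge_add_one_self[of "- 1 / M"] by (intro power_mono) auto
  also have "\<dots> = exp (- (real n / M))"
    by (simp flip: exp_of_nat_mult)
  also have "\<dots> \<le> exp (- (2 * ln (real n)))"
    using ln_le by simp
  also have "\<dots> = 1 / real n ^ 2"
    using exp_of_nat_mult[of 2 "ln (real n)"] n by (simp add: exp_minus divide_inverse)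
  finally have power_le: "(1 - 1 / M) ^ n \<le> 1 / real n ^ 2" .
  have "ln 2 \<le> ln (real n)"
    using n by simp
  then have "2 / 3 \<le> ln (real n)"
    using ln2_ge_two_thirds by linarith
  then have "1 * M \<le> 2 * ln (real n) * M"
    using M by (intro mult_right_mono) auto
  also have "\<dots> \<le> real n"
    using ln_le M by (simp add: le_divide_eq)
  finally have "M \<le> real n" by simp
  then have "M * (1 - 1 / M) ^ n \<le> real n * (1 / real n ^ 2)"
    using power_le M by (intro mult_mono) auto
  then show ?thesis
    using n by (simp add: power2_eq_square)
qed

text \<open>The resolution \<open>m \<approx> C / r\<close> keeps edges of length \<open>C / m\<close> within the connection radius
  \<open>r\<close>, and because \<open>r ^ D\<close> exceeds \<open>ln n / n\<close> by the large factor \<open>F ^ D\<close>, the \<open>m ^ D\<close> cells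
  are still few enough to be all hit by \<open>n\<close> random points.\<close>

lemma grid_resolution_bounds:
  fixes C F :: real and n m0 D :: nat
  assumes C: "0 < C" and m0: "1 \<le> m0" and D: "1 \<le> D" and n: "2 \<le> n" and F: "4 * C \<le> F"
    and ln_small: "ln (real n) / real n < 1 / (2 * real m0 ^ D)"
  defines "r \<equiv> F * (ln (real n) / real n) powr (1 / real D)"
  defines "m \<equiv> max m0 (nat \<lceil>C / r\<rceil>)"
  shows "m0 \<le> m" and "C / real m \<le> r" and "2 * ln (real n) \<le> real n / real m ^ D"
proof -
  have ln_pos: "0 < ln (real n)" and n_pos: "0 < real n"
    using n by auto
  have r_pos: "0 < r"
    using C F ln_pos n_pos by (simp add: r_def)
  have "((ln (real n) / real n) powr (1 / real D)) ^ D = ln (real n) / real n"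
    using ln_pos n_pos D by (subst powr_realpow[symmetric]) (simp_all add: powr_powr)
  then have r_pow: "r ^ D = F ^ D * (ln (real n) / real n)"
    by (simp add: r_def power_mult_distrib)
  have m_pos: "0 < real m"
    using m0 by (simp add: m_def)
  show "m0 \<le> m"
    by (simp add: m_def)
  have "C / r \<le> real m"
    unfolding m_def by linarith
  then show "C / real m \<le> r"
    using m_pos r_pos C by (simp add: field_simps)
  show "2 * ln (real n) \<le> real n / real m ^ D"
  proof (cases "nat \<lceil>C / r\<rceil> \<le> m0")
    case True
    then have "m = m0"
      by (simp add: m_def)
    have "2 * ln (real n) \<le> real n / real m0 ^ D"
      using ln_small n_pos m0 by (simp add: field_simps)
    then show ?thesis
      using \<open>m = m0\<close> by simp
  next
    case False
    then have "m = nat \<lceil>C / r\<rceil>"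
      unfolding m_def by (metis max.absorb2 nle_le)
    moreover have "1 < C / r"
      using False m0 by simp
    ultimately have m_le: "real m \<le> 2 * C / r"
      by linarith
    have "(2::real) \<le> 2 ^ D"
      using D by (metis power_one_right power_increasing one_le_numeral)
    also have "\<dots> \<le> (F / (2 * C)) ^ D"
      using F C by (intro power_mono) (auto simp: field_simps)
    finally have "2 * ln (real n) \<le> (F / (2 * C)) ^ D * ln (real n)"
      using ln_pos by (intro mult_right_mono) auto
    also have "\<dots> = real n / (2 * C / r) ^ D"
      using r_pow r_pos C n_pos by (simp add: field_simps)
    also have "\<dots> \<le> real n / real m ^ D"
      using m_le m_pos by (intro divide_left_mono power_mono) auto
    finally show ?thesis .
  qed
qed

lemma exists_grid_resolution:
  fixes f :: "nat \<Rightarrow> real" and C :: real and m0 D :: nat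
  assumes C: "0 < C" and m0: "1 \<le> m0" and D: "1 \<le> D" and f: "filterlim f at_top sequentially"
  shows "\<exists>m :: nat \<Rightarrow> nat. \<forall>\<^sub>F n in sequentially. m0 \<le> m n \<and>
           C / real (m n) \<le> f n * (ln (real n) / real n) powr (1 / real D) \<and>
           2 * ln (real n) \<le> real n / real (m n) ^ D"
proof -
  define m where "m n = max m0 (nat \<lceil>C / (f n * (ln (real n) / real n) powr (1 / real D))\<rceil>)" for n
  have "\<forall>\<^sub>F n in sequentially. 2 \<le> n"
    by (rule eventually_ge_at_top)
  moreover have "\<forall>\<^sub>F n in sequentially. 4 * C \<le> f n"
    using f by (simp add: filterlim_at_top)
  moreover have "\<forall>\<^sub>F n in sequentially. ln (real n) / real n < 1 / (2 * real m0 ^ D)"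
    using m0 by (intro order_tendstoD(2)[OF lim_ln_over_n]) simp
  ultimately have "\<forall>\<^sub>F n in sequentially. m0 \<le> m n \<and>
      C / real (m n) \<le> f n * (ln (real n) / real n) powr (1 / real D) \<and>
      2 * ln (real n) \<le> real n / real (m n) ^ D"
    by eventually_elim (use grid_resolution_bounds[OF C m0 D] in \<open>simp add: m_def\<close>)
  then show ?thesis
    by blast
qed

lemma measure_grid_covering_event_tendsto_1:
  fixes m :: "nat \<Rightarrow> nat"
  assumes "\<forall>\<^sub>F n in sequentially. 1 \<le> m n \<and> 2 * ln (real n) \<le> real n / real (m n) ^ CARD('d)"
  shows "(\<lambda>n. measure (sample_space n) (grid_covering_event n (m n) :: (nat \<Rightarrow> real^'d) set)) \<longlonglongrightarrow> 1"
proof (rule tendsto_sandwich)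
  show "\<forall>\<^sub>F n in sequentially.
      measure (sample_space n) (grid_covering_event n (m n) :: (nat \<Rightarrow> real^'d) set) \<le> 1"
    by (simp add: prob_space.prob_le_1[OF prob_space_sample_space])
  from assms eventually_ge_at_top[of 2]
  show "\<forall>\<^sub>F n in sequentially.
      1 - 1 / real n \<le> measure (sample_space n) (grid_covering_event n (m n) :: (nat \<Rightarrow> real^'d) set)"
  proof eventually_elim
    case (elim n)
    then have "real (m n) ^ CARD('d) * (1 - 1 / real (m n) ^ CARD('d)) ^ n \<le> 1 / real n"
      by (intro mult_one_minus_inverse_power_le) auto
    then show ?case
      using measure_grid_covering_event[of "m n" n, where 'd='d] by (simp add: power_one_over)
  qed
  show "(\<lambda>n. 1 - 1 / real n) \<longlonglongrightarrow> 1"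
    using tendsto_diff[OF tendsto_const lim_1_over_n, of 1] by simp
qed simp

lemma continuous_strict_mono_equispaced_preimages:
  fixes \<phi> :: "real \<Rightarrow> real" and N :: nat
  assumes cont: "continuous_on {0..1} \<phi>" and mono: "strict_mono_on {0..1} \<phi>" and N: "0 < N"
  obtains t where "\<And>k. k \<le> N \<Longrightarrow> t k \<in> {0..1}"
    and "\<And>k. k \<le> N \<Longrightarrow> \<phi> (t k) = \<phi> 0 + real k / real N * (\<phi> 1 - \<phi> 0)"
    and "t 0 = 0" and "t N = 1" and "\<And>k k'. k \<le> k' \<Longrightarrow> k' \<le> N \<Longrightarrow> t k \<le> t k'"
proof -
  define level where "level k = \<phi> 0 + real k / real N * (\<phi> 1 - \<phi> 0)" for k
  have "\<phi> 0 \<le> \<phi> 1"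
    using strict_mono_on_leD[OF mono] by simp
  have "\<phi> 0 \<le> level k \<and> level k \<le> \<phi> 1" if "k \<le> N" for k
  proof -
    have "real k / real N * (\<phi> 1 - \<phi> 0) \<le> 1 * (\<phi> 1 - \<phi> 0)"
      using that N \<open>\<phi> 0 \<le> \<phi> 1\<close> by (intro mult_right_mono) auto
    then show ?thesis
      using \<open>\<phi> 0 \<le> \<phi> 1\<close> by (simp add: level_def)
  qed
  then have "\<exists>s. k \<le> N \<longrightarrow> s \<in> {0..1} \<and> \<phi> s = level k" for k
    using IVT'[of \<phi> 0 "level k" 1] cont by auto
  then obtain t where t: "\<And>k. k \<le> N \<Longrightarrow> t k \<in> {0..1} \<and> \<phi> (t k) = level k"
    by metis
  have level_mono: "level k \<le> level k'" if "k \<le> k'" for k k'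
    using \<open>\<phi> 0 \<le> \<phi> 1\<close> that by (simp add: level_def divide_right_mono mult_right_mono)
  show ?thesis
  proof
    show "t 0 = 0" "t N = 1"
      using t[of 0] t[of N] N strict_mono_on_eqD[OF mono] by (auto simp: level_def)
    show "t k \<le> t k'" if "k \<le> k'" "k' \<le> N" for k k'
      using t[of k] t[of k'] that level_mono[OF that(1)] strict_mono_on_less[OF mono]
      by (metis not_le order.strict_iff_not order.trans)
  qed (use t level_def in auto)
qed

lemma norm_cart_le_card_mult:
  fixes x :: "real^'d"
  assumes "\<And>i. \<bar>x $ i\<bar> \<le> c"
  shows "norm x \<le> real CARD('d) * c"
proof -
  have "norm x \<le> (\<Sum>i\<in>UNIV. \<bar>x $ i\<bar>)"
    by (rule norm_le_l1_cart)
  also have "\<dots> \<le> (\<Sum>i\<in>(UNIV :: 'd set). c)"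
    using assms by (intro sum_mono)
  finally show ?thesis by simp
qed

lemma norm_diff_le_sum_if_prec:
  fixes a b :: "real^'d"
  assumes "prec a b"
  shows "norm (b - a) \<le> (\<Sum>i\<in>UNIV. b $ i - a $ i)"
  using norm_le_l1_cart[of "b - a"] assms by (simp add: prec_def)

lemma unit_cube_component_diff_le:
  assumes "x \<in> unit_cube" "y \<in> unit_cube"
  shows "\<bar>(x - y) $ i\<bar> \<le> 1"
  using assms by (auto simp: unit_cube_def abs_le_iff) (smt (verit))+

lemma convex_unit_cube: "convex (unit_cube :: (real^'d) set)"
  by (simp add: unit_cube_eq_cbox)

lemma paths_ST_endpoints:
  assumes "\<sigma> \<in> paths_ST S T"
  shows "\<sigma> 0 = S" "\<sigma> 1 = T" "S \<in> unit_cube" "T \<in> unit_cube"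
  using assms by (auto simp: paths_ST_def)

lemma monotone_path_component_mono:
  assumes "monotone_path \<sigma>" "0 \<le> a" "a \<le> b" "b \<le> 1"
  shows "\<sigma> a $ i \<le> \<sigma> b $ i"
  using assms unfolding monotone_path_def prec_def by blast

text \<open>The parameters are taken at equispaced levels of \<open>\<phi> s = s + (\<Sum>i. \<sigma> s $ i)\<close>; the
  summand \<open>s\<close> makes \<open>\<phi>\<close> strictly increasing even where \<open>\<sigma>\<close> is constant.\<close>

lemma monotone_path_equispaced_parameters:
  fixes \<sigma> :: "real \<Rightarrow> real^'d" and N :: nat
  assumes \<sigma>: "\<sigma> \<in> paths_ST S T" "monotone_path \<sigma>" and N: "0 < N"
  obtains t where "\<And>k. k \<le> N \<Longrightarrow> t k \<in> {0..1}" and "t 0 = 0" and "t N = 1"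
    and "\<And>k k'. k \<le> k' \<Longrightarrow> k' \<le> N \<Longrightarrow> t k \<le> t k'"
    and "\<And>k. k < N \<Longrightarrow> norm (\<sigma> (t (Suc k)) - \<sigma> (t k)) \<le> (1 + real CARD('d)) / real N"
proof -
  note ends = paths_ST_endpoints[OF \<sigma>(1)]
  define \<phi> where "\<phi> s = s + (\<Sum>i\<in>UNIV. \<sigma> s $ i)" for s
  have "continuous_on {0..1} \<phi>"
    using \<sigma>(1) unfolding \<phi>_def paths_ST_def
    by (intro continuous_intros continuous_on_component) auto
  moreover have "strict_mono_on {0..1} \<phi>"
    by (rule strict_mono_onI)
      (auto simp: \<phi>_def intro!: add_less_le_mono sum_mono monotone_path_component_mono[OF \<sigma>(2)])
  ultimately obtain t where t01: "\<And>k. k \<le> N \<Longrightarrow> t k \<in> {0..1}"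
    and t_level: "\<And>k. k \<le> N \<Longrightarrow> \<phi> (t k) = \<phi> 0 + real k / real N * (\<phi> 1 - \<phi> 0)"
    and "t 0 = 0" "t N = 1" and t_mono: "\<And>k k'. k \<le> k' \<Longrightarrow> k' \<le> N \<Longrightarrow> t k \<le> t k'"
    using continuous_strict_mono_equispaced_preimages N by metis
  moreover have "norm (\<sigma> (t (Suc k)) - \<sigma> (t k)) \<le> (1 + real CARD('d)) / real N" if "k < N" for k
  proof -
    have "prec (\<sigma> (t k)) (\<sigma> (t (Suc k)))"
      using t01 t_mono that \<sigma>(2) by (simp add: monotone_path_def)
    then have "norm (\<sigma> (t (Suc k)) - \<sigma> (t k)) \<le> (\<Sum>i\<in>UNIV. \<sigma> (t (Suc k)) $ i - \<sigma> (t k) $ i)"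
      by (rule norm_diff_le_sum_if_prec)
    also have "\<dots> \<le> \<phi> (t (Suc k)) - \<phi> (t k)"
      using t_mono[of k "Suc k"] that by (simp add: \<phi>_def sum_subtractf)
    also have "\<dots> = (1 + (\<Sum>i\<in>UNIV. (T - S) $ i)) / real N"
      using t_level[of k] t_level[of "Suc k"] that ends
      by (simp add: \<phi>_def sum_subtractf field_simps)
    also have "\<dots> \<le> (1 + real CARD('d)) / real N"
      using sum_mono[of UNIV "\<lambda>i. (T - S) $ i" "\<lambda>_. 1"] unit_cube_component_diff_le[OF ends(4,3)]
      by (intro divide_right_mono) (auto simp: abs_le_iff)
    finally show ?thesis .
  qed
  ultimately show ?thesis
    using that by blast
qed

text \<open>Shrinking the path towards the segment from \<open>S\<close> to \<open>T\<close> by the factor \<open>1 - \<eta>\<close> turns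
  the weakly increasing points \<open>\<sigma> (t k)\<close> into points that increase by at least
  \<open>\<eta> * \<delta> / N\<close> in every coordinate.\<close>

lemma monotone_path_staircase:
  fixes \<sigma> :: "real \<Rightarrow> real^'d" and N :: nat
  assumes \<sigma>: "\<sigma> \<in> paths_ST S T" "monotone_path \<sigma>"
    and gap: "\<And>i. \<delta> \<le> T $ i - S $ i" and \<eta>: "0 \<le> \<eta>" "\<eta> \<le> 1" and N: "0 < N"
  obtains p where "p 0 = S" and "p N = T"
    and "\<And>k i. k < N \<Longrightarrow> p k $ i + \<eta> * \<delta> / real N \<le> p (Suc k) $ i"
    and "\<And>k. k < N \<Longrightarrow> norm (p (Suc k) - p k) \<le> (1 + real CARD('d)) / real N"
    and "\<And>k. k \<le> N \<Longrightarrow> \<exists>s\<in>{0..1}. norm (p k - \<sigma> s) \<le> \<eta> * real CARD('d)"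
proof -
  note ends = paths_ST_endpoints[OF \<sigma>(1)]
  obtain t where t01: "\<And>k. k \<le> N \<Longrightarrow> t k \<in> {0..1}" and t0: "t 0 = 0" and tN: "t N = 1"
    and t_mono: "\<And>k k'. k \<le> k' \<Longrightarrow> k' \<le> N \<Longrightarrow> t k \<le> t k'"
    and \<sigma>_jump: "\<And>k. k < N \<Longrightarrow> norm (\<sigma> (t (Suc k)) - \<sigma> (t k)) \<le> (1 + real CARD('d)) / real N"
    by (fact monotone_path_equispaced_parameters[OF \<sigma> N])
  define q where "q k = S + (real k / real N) *\<^sub>R (T - S)" for k
  define p where "p k = (1 - \<eta>) *\<^sub>R \<sigma> (t k) + \<eta> *\<^sub>R q k" for k
  have p_diff: "p (Suc k) - p k
      = (1 - \<eta>) *\<^sub>R (\<sigma> (t (Suc k)) - \<sigma> (t k)) + (\<eta> / real N) *\<^sub>R (T - S)" for k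
    using N by (simp add: p_def q_def algebra_simps add_divide_distrib)
  show ?thesis
  proof
    show "p 0 = S" "p N = T"
      using N ends by (simp_all add: p_def q_def t0 tN algebra_simps)
  next
    fix k i assume "k < N"
    have "0 \<le> (1 - \<eta>) * (\<sigma> (t (Suc k)) $ i - \<sigma> (t k) $ i)"
      using t01 t_mono \<open>k < N\<close> \<eta> by (simp add: monotone_path_component_mono[OF \<sigma>(2)])
    moreover have "\<eta> * \<delta> / real N \<le> \<eta> / real N * (T $ i - S $ i)"
      using gap[of i] \<eta> by (simp add: divide_right_mono mult_left_mono)
    ultimately show "p k $ i + \<eta> * \<delta> / real N \<le> p (Suc k) $ i"
      using arg_cong[OF p_diff[of k], of "\<lambda>v. v $ i"] by simp
  next
    fix k assume "k < N"
    have "norm ((1 - \<eta>) *\<^sub>R (\<sigma> (t (Suc k)) - \<sigma> (t k))) \<le> (1 - \<eta>) * ((1 + real CARD('d)) / real N)"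
      using mult_left_mono[OF \<sigma>_jump[OF \<open>k < N\<close>], of "1 - \<eta>"] \<eta> by simp
    moreover have "norm (T - S) \<le> real CARD('d) * 1"
      by (intro norm_cart_le_card_mult unit_cube_component_diff_le ends)
    then have "norm ((\<eta> / real N) *\<^sub>R (T - S)) \<le> \<eta> / real N * (1 + real CARD('d))"
      using mult_left_mono[of "norm (T - S)" "1 + real CARD('d)" "\<eta> / real N"] \<eta> by simp
    ultimately have "norm (p (Suc k) - p k)
        \<le> (1 - \<eta>) * ((1 + real CARD('d)) / real N) + \<eta> / real N * (1 + real CARD('d))"
      unfolding p_diff by (intro norm_triangle_le add_mono)
    also have "\<dots> = (1 + real CARD('d)) / real N"
      using N by (simp add: field_simps)
    finally show "norm (p (Suc k) - p k) \<le> (1 + real CARD('d)) / real N" .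
  next
    fix k assume "k \<le> N"
    have "q k \<in> closed_segment S T"
      using \<open>k \<le> N\<close> N
      by (auto simp: q_def in_segment algebra_simps intro!: exI[of _ "real k / real N"])
    then have "norm (q k - \<sigma> (t k)) \<le> real CARD('d) * 1"
      using closed_segment_subset[OF ends(3,4) convex_unit_cube] t01[OF \<open>k \<le> N\<close>] \<sigma>(1)
      by (intro norm_cart_le_card_mult unit_cube_component_diff_le) (auto simp: paths_ST_def)
    moreover have "p k - \<sigma> (t k) = \<eta> *\<^sub>R (q k - \<sigma> (t k))"
      by (simp add: p_def algebra_simps)
    ultimately show "\<exists>s\<in>{0..1}. norm (p k - \<sigma> s) \<le> \<eta> * real CARD('d)"
      using t01[OF \<open>k \<le> N\<close>] \<eta> by (auto intro!: bexI[of _ "t k"] mult_left_mono)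
  qed
qed

lemma lift_Suc_mono_le_bounded:
  fixes f :: "nat \<Rightarrow> 'a::preorder"
  assumes "\<And>k. k < N \<Longrightarrow> f k \<le> f (Suc k)" and "j \<le> k" "k \<le> N"
  shows "f j \<le> f k"
  using assms(2,3)
proof (induction k rule: dec_induct)
  case (step k)
  then show ?case using assms(1)[of k] by (auto intro: order_trans)
qed simp

lemma floor_grid_bounds:
  fixes m a :: real
  assumes "0 < m"
  shows "of_int \<lfloor>m * a\<rfloor> / m \<le> a" and "a < of_int \<lfloor>m * a\<rfloor> / m + 1 / m"
  using assms of_int_floor_le[of "m * a"] real_of_int_floor_add_one_gt[of "m * a"]
  by (simp_all add: field_simps)

lemma floor_grid_separated:
  fixes m a b :: real
  assumes "0 < m" and "a + 1 / m \<le> b"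
  shows "of_int \<lfloor>m * a\<rfloor> / m + 1 / m \<le> of_int \<lfloor>m * b\<rfloor> / m"
proof -
  have "m * a + 1 \<le> m * b"
    using assms by (simp add: field_simps)
  then have "\<lfloor>m * a\<rfloor> + 1 \<le> \<lfloor>m * b\<rfloor>"
    by (metis floor_add_int floor_mono of_int_1)
  then show ?thesis
    using assms(1)
    by (simp add: divide_right_mono flip: add_divide_distrib of_int_add of_int_le_iff)
qed

definition grid_cell_index :: "nat \<Rightarrow> real^'d \<Rightarrow> ('d \<Rightarrow> nat)" where
  "grid_cell_index m q = (\<lambda>i. nat \<lfloor>real m * q $ i\<rfloor>)"

lemma grid_cell_index:
  fixes q :: "real^'d"
  assumes "0 < m" and "\<And>i. 0 \<le> q $ i" and "\<And>i. q $ i < 1"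
  shows grid_cell_index_in_grid_cells: "grid_cell_index m q \<in> grid_cells m"
    and mem_grid_cell_index: "x \<in> grid_cell m (grid_cell_index m q) \<longleftrightarrow> (\<forall>i.
      of_int \<lfloor>real m * q $ i\<rfloor> / real m < x $ i \<and> x $ i < of_int \<lfloor>real m * q $ i\<rfloor> / real m + 1 / real m)"
proof -
  have "0 \<le> \<lfloor>real m * q $ i\<rfloor>" "\<lfloor>real m * q $ i\<rfloor> < int m" for i
    using assms by (simp_all add: floor_less_iff mult_strict_left_mono[of _ 1, simplified])
  then show "grid_cell_index m q \<in> grid_cells m"
    and "x \<in> grid_cell m (grid_cell_index m q) \<longleftrightarrow> (\<forall>i.
      of_int \<lfloor>real m * q $ i\<rfloor> / real m < x $ i \<and> x $ i < of_int \<lfloor>real m * q $ i\<rfloor> / real m + 1 / real m)"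
    by (auto simp: grid_cells_def grid_cell_index_def grid_cell_def mem_box_cart add_divide_distrib
        nat_less_iff)
qed

text \<open>Snapping: the interior points of a staircase with steps at least \<open>1 / m\<close> lie in distinct
  grid cells, so choosing one point of \<open>V\<close> in each of these cells keeps the chain strictly
  increasing.\<close>

lemma staircase_snap_to_grid:
  fixes p :: "nat \<Rightarrow> real^'d" and m N :: nat
  assumes m: "0 < m" and cover: "covers_grid m V"
    and S: "S \<in> unit_cube" and T: "T \<in> unit_cube" and p0: "p 0 = S" and pN: "p N = T"
    and step: "\<And>k i. k < N \<Longrightarrow> p k $ i + 1 / real m \<le> p (Suc k) $ i"
  obtains x where "x 0 = S" and "x N = T" and "\<And>k. 0 < k \<Longrightarrow> k < N \<Longrightarrow> x k \<in> V \<inter> unit_cube"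
    and "\<And>k. k \<le> N \<Longrightarrow> norm (x k - p k) \<le> real CARD('d) / real m"
    and "\<And>k i. k < N \<Longrightarrow> x k $ i < x (Suc k) $ i"
proof -
  have m_pos: "0 < real m" and inv_m_pos: "0 < 1 / real m"
    using m by simp_all
  have p_mono: "p j $ i \<le> p k $ i" if "j \<le> k" "k \<le> N" for j k i
    using step inv_m_pos by (intro lift_Suc_mono_le_bounded[OF _ that]) (smt (verit))
  have p_interior: "S $ i + 1 / real m \<le> p k $ i" "p k $ i + 1 / real m \<le> T $ i"
    if "0 < k" "k < N" for k i
    using step[of 0 i] p_mono[of 1 k i] step[of k i] p_mono[of "Suc k" N i] that p0 pN by auto
  have p_unit: "0 \<le> p k $ i" "p k $ i < 1" if "0 < k" "k < N" for k i
  proof -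
    have "0 \<le> S $ i" "T $ i \<le> 1"
      using S T by (simp_all add: unit_cube_def)
    then show "0 \<le> p k $ i" "p k $ i < 1"
      using p_interior[OF that, of i] inv_m_pos by linarith+
  qed
  define lo where "lo a = of_int \<lfloor>real m * a\<rfloor> / real m" for a
  have "\<forall>k. \<exists>y. 0 < k \<and> k < N \<longrightarrow> y \<in> V \<inter> grid_cell m (grid_cell_index m (p k))"
    using cover grid_cell_index_in_grid_cells[OF m p_unit] by (auto simp: covers_grid_def)
  then obtain y where y: "\<And>k. 0 < k \<Longrightarrow> k < N \<Longrightarrow> y k \<in> V \<inter> grid_cell m (grid_cell_index m (p k))"
    by metis
  have y_bounds: "lo (p k $ i) < y k $ i" "y k $ i < lo (p k $ i) + 1 / real m"
    if "0 < k" "k < N" for k i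
    using y[OF that] mem_grid_cell_index[OF m p_unit[OF that]] by (auto simp: lo_def)
  have lo_bounds: "lo a \<le> a" "a < lo a + 1 / real m" for a
    using floor_grid_bounds[OF m_pos] by (simp_all add: lo_def)
  have lo_separated: "lo (p k $ i) + 1 / real m \<le> lo (p (Suc k) $ i)" if "k < N" for k i
    using floor_grid_separated[OF m_pos step[OF that]] by (simp add: lo_def)
  define x where "x k = (if 0 < k \<and> k < N then y k else p k)" for k
  have x_close: "p k $ i - 1 / real m < x k $ i" "x k $ i < p k $ i + 1 / real m" for k i
    using y_bounds[of k i] lo_bounds[of "p k $ i"] inv_m_pos by (auto simp: x_def)
  show ?thesis
  proof
    show "x 0 = S" "x N = T"
      by (simp_all add: x_def p0 pN)
    show "x k \<in> V \<inter> unit_cube" if "0 < k" "k < N" for k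
      using y[OF that] grid_cell_subset_unit_cube[OF grid_cell_index_in_grid_cells[OF m p_unit]]
        that by (auto simp: x_def)
    show "norm (x k - p k) \<le> real CARD('d) / real m" for k
    proof -
      have "\<bar>(x k - p k) $ i\<bar> \<le> 1 / real m" for i
        using x_close[of k i] by (simp add: abs_le_iff)
      then show ?thesis
        using norm_cart_le_card_mult[of "x k - p k" "1 / real m"] by simp
    qed
    show "x k $ i < x (Suc k) $ i" if "k < N" for k i
    proof (cases "0 < k \<and> Suc k < N")
      case True
      then show ?thesis
        using y_bounds[of k i] y_bounds[of "Suc k" i] lo_separated[OF that, of i]
        by (simp add: x_def)
    next
      case False
      then have "x k = p k \<or> x (Suc k) = p (Suc k)"
        by (auto simp: x_def)
      then show ?thesis
        using x_close[of k i] x_close[of "Suc k" i] step[OF that, of i] by auto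
    qed
  qed
qed

fun polygonal_path :: "(real^'d) list \<Rightarrow> real \<Rightarrow> real^'d" where
  "polygonal_path [] = linepath 0 0"
| "polygonal_path [x] = linepath x x"
| "polygonal_path (x # y # zs) = linepath x y +++ polygonal_path (y # zs)"

lemma polyline_image_Cons2:
  "polyline_image (x # y # zs) = closed_segment x y \<union> polyline_image (y # zs)"
proof -
  have "{i. Suc i < length (x # y # zs)} = insert 0 (Suc ` {i. Suc i < length (y # zs)})"
    by (auto simp: image_iff) (metis Suc_less_SucD not0_implies_Suc)
  then show ?thesis
    unfolding polyline_image_def by auto
qed

lemma path_polygonal_path:
  assumes "vs \<noteq> []"
  shows "path (polygonal_path vs) \<and> pathstart (polygonal_path vs) = hd vs \<and>
    pathfinish (polygonal_path vs) = last vs \<and> path_image (polygonal_path vs) = polyline_image vs"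
  using assms
  by (induction vs rule: polygonal_path.induct)
    (simp_all add: path_image_join polyline_image_Cons2, simp add: polyline_image_def)

lemma set_cost_polyline_le:
  assumes cost: "\<forall>\<sigma>'\<in>paths_ST S T. \<sigma>' ` {0..1} \<subseteq> A \<longrightarrow> path_cost M \<sigma>' \<le> B"
    and vs: "vs \<noteq> []" "hd vs = S" "last vs = T" and img: "polyline_image vs \<subseteq> A \<inter> unit_cube"
  shows "set_cost M (polyline_image vs) \<le> B"
proof -
  have img_eq: "polygonal_path vs ` {0..1} = polyline_image vs"
    using path_polygonal_path[OF vs(1)] by (simp add: path_image_def)
  have "polygonal_path vs \<in> paths_ST S T"
    using path_polygonal_path[OF vs(1)] vs img img_eq
    by (auto simp: paths_ST_def path_def pathstart_def pathfinish_def)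
  moreover have "polygonal_path vs ` {0..1} \<subseteq> A"
    using img img_eq by simp
  ultimately have "path_cost M (polygonal_path vs) \<le> B"
    using cost by blast
  then show ?thesis
    by (simp add: path_cost_def img_eq)
qed

lemma polyline_image_subset_convex:
  assumes "convex A" and "set vs \<subseteq> A"
  shows "polyline_image vs \<subseteq> A"
  unfolding polyline_image_def
proof (intro Un_least UN_least)
  fix i assume "i \<in> {i. Suc i < length vs}"
  then show "closed_segment (vs ! i) (vs ! Suc i) \<subseteq> A"
    using assms by (intro closed_segment_subset) auto
qed (rule assms(2))

lemma polyline_image_subset_tube:
  assumes "0 \<le> r" and "\<And>i. Suc i < length vs \<Longrightarrow> dist (vs ! i) (vs ! Suc i) \<le> r"
    and "\<And>v. v \<in> set vs \<Longrightarrow> \<exists>t\<in>{0..1}. dist v (\<sigma> t) \<le> \<rho>" and "r + \<rho> < \<delta>"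
  shows "polyline_image vs \<subseteq> tube \<delta> \<sigma>"
proof
  fix z assume z: "z \<in> polyline_image vs"
  obtain v where v: "v \<in> set vs" and "dist z v \<le> r"
  proof (cases rule: UnE[OF z[unfolded polyline_image_def]])
    case 2
    then obtain i where i: "Suc i < length vs" "z \<in> closed_segment (vs ! i) (vs ! Suc i)"
      by blast
    then have "dist z (vs ! i) \<le> r"
      using segment_bound(1)[OF i(2)] assms(2)[OF i(1)] by (simp add: dist_norm norm_minus_commute)
    then show ?thesis
      using i(1) that by (meson Suc_lessD nth_mem)
  qed (use assms(1) that in auto)
  moreover obtain t where "t \<in> {0..1}" and "dist v (\<sigma> t) \<le> \<rho>"
    using assms(3)[OF v] by blast
  ultimately show "z \<in> tube \<delta> \<sigma>"
    using dist_triangle[of z "\<sigma> t" v] assms(4) by (force simp: tube_def dist_commute)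
qed

lemma graph_monotone_path_mono:
  "graph_monotone_path V r S T vs \<Longrightarrow> r \<le> r' \<Longrightarrow> graph_monotone_path V r' S T vs"
  unfolding graph_monotone_path_def by (meson order_trans)

lemma graph_monotone_path_of_chain:
  fixes x :: "nat \<Rightarrow> real^'d"
  assumes "x 0 = S" "x N = T" "\<And>k. 0 < k \<Longrightarrow> k < N \<Longrightarrow> x k \<in> V"
    and "\<And>k i. k < N \<Longrightarrow> x k $ i < x (Suc k) $ i" and "\<And>k. k < N \<Longrightarrow> dist (x k) (x (Suc k)) \<le> r"
  shows "graph_monotone_path (V \<union> {S, T}) r S T (map x [0..<Suc N])"
  unfolding graph_monotone_path_def
proof (intro conjI allI impI)
  show "set (map x [0..<Suc N]) \<subseteq> V \<union> {S, T}"
    using assms(1-3) by (auto simp: less_Suc_eq_le) (metis gr0I)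
  fix k assume "Suc k < length (map x [0..<Suc N])"
  then have k: "k < N"
    and nth: "map x [0..<Suc N] ! k = x k" "map x [0..<Suc N] ! Suc k = x (Suc k)"
    by (simp_all del: upt_Suc add: nth_map_upt)
  show "map x [0..<Suc N] ! k \<noteq> map x [0..<Suc N] ! Suc k"
    using assms(4)[OF k] unfolding nth by (metis less_irrefl)
  show "norm (map x [0..<Suc N] ! k - map x [0..<Suc N] ! Suc k) \<le> r"
    using assms(5)[OF k] unfolding nth by (simp add: dist_norm)
  show "prec (map x [0..<Suc N] ! k) (map x [0..<Suc N] ! Suc k)"
    using assms(4)[OF k] unfolding nth prec_def by (simp add: less_imp_le)
qed (use assms(1,2) in \<open>simp_all add: hd_map last_map del: upt_Suc\<close>)

lemma staircase_grid_tube_path: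
  fixes p :: "nat \<Rightarrow> real^'d" and \<sigma> :: "real \<Rightarrow> real^'d" and m N :: nat
  assumes m: "0 < m" and N: "0 < N" and cover: "covers_grid m V"
    and S: "S \<in> unit_cube" and T: "T \<in> unit_cube" and p0: "p 0 = S" and pN: "p N = T"
    and step: "\<And>k i. k < N \<Longrightarrow> p k $ i + 1 / real m \<le> p (Suc k) $ i"
    and jump: "\<And>k. k < N \<Longrightarrow> norm (p (Suc k) - p k) \<le> L"
    and near: "\<And>k. k \<le> N \<Longrightarrow> \<exists>t\<in>{0..1}. norm (p k - \<sigma> t) \<le> \<rho>"
    and small: "\<rho> + L + 3 * real CARD('d) / real m < \<delta>"
  shows "\<exists>vs. graph_monotone_path (V \<union> {S, T}) (L + 2 * real CARD('d) / real m) S T vs \<and>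
           polyline_image vs \<subseteq> tube \<delta> \<sigma> \<inter> unit_cube"
proof -
  define r where "r = L + 2 * real CARD('d) / real m"
  obtain x where x0: "x 0 = S" and xN: "x N = T"
    and x_in: "\<And>k. 0 < k \<Longrightarrow> k < N \<Longrightarrow> x k \<in> V \<inter> unit_cube"
    and x_near: "\<And>k. k \<le> N \<Longrightarrow> norm (x k - p k) \<le> real CARD('d) / real m"
    and x_incr: "\<And>k i. k < N \<Longrightarrow> x k $ i < x (Suc k) $ i"
    using staircase_snap_to_grid[where p = p, OF m cover S T p0 pN step] by blast
  have x_jump: "dist (x k) (x (Suc k)) \<le> r" if "k < N" for k
  proof -
    have "dist (x k) (x (Suc k))
        \<le> dist (x k) (p k) + dist (p (Suc k)) (p k) + dist (x (Suc k)) (p (Suc k))"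
      by metric
    then show ?thesis
      using x_near[of k] x_near[of "Suc k"] jump[OF that] that by (simp add: r_def dist_norm)
  qed
  define vs where "vs = map x [0..<Suc N]"
  have set_vs: "set vs = x ` {..N}"
    by (simp add: vs_def atLeast0LessThan lessThan_Suc_atMost del: upt_Suc)
  have "graph_monotone_path (V \<union> {S, T}) r S T vs"
    unfolding vs_def using x0 xN x_in x_incr x_jump by (intro graph_monotone_path_of_chain) auto
  moreover have "polyline_image vs \<subseteq> unit_cube"
    using x_in x0 xN S T by (intro polyline_image_subset_convex[OF convex_unit_cube])
      (auto simp: set_vs, metis gr0I le_neq_implies_less)
  moreover have "polyline_image vs \<subseteq> tube \<delta> \<sigma>"
  proof (rule polyline_image_subset_tube)
    show "0 \<le> r"
      using jump[OF N] by (simp add: r_def order.trans[OF norm_ge_zero])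
    show "dist (vs ! i) (vs ! Suc i) \<le> r" if "Suc i < length vs" for i
      using x_jump[of i] that by (simp add: vs_def nth_map_upt del: upt_Suc)
    show "\<exists>t\<in>{0..1}. dist v (\<sigma> t) \<le> real CARD('d) / real m + \<rho>" if v: "v \<in> set vs" for v
    proof -
      obtain k where "k \<le> N" and "v = x k"
        using v by (auto simp: set_vs)
      moreover obtain t where "t \<in> {0..1}" and "norm (p k - \<sigma> t) \<le> \<rho>"
        using near[OF \<open>k \<le> N\<close>] by blast
      ultimately show ?thesis
        using x_near[OF \<open>k \<le> N\<close>] dist_triangle[of "x k" "\<sigma> t" "p k"]
        by (force simp: dist_norm)
    qed
    show "r + (real CARD('d) / real m + \<rho>) < \<delta>"
      using small by (simp add: r_def)
  qed
  ultimately show ?thesis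
    unfolding r_def by blast
qed

lemma monotone_path_grid_staircase:
  fixes \<sigma> :: "real \<Rightarrow> real^'d" and m :: nat
  assumes \<sigma>: "\<sigma> \<in> paths_ST S T" "monotone_path \<sigma>"
    and gap: "\<And>i. \<delta> \<le> T $ i - S $ i" and \<delta>: "0 < \<delta>" and \<eta>: "0 < \<eta>" "\<eta> \<le> 1"
    and m: "1 < real m * \<eta> * \<delta>"
  obtains N p where "0 < N" and "p 0 = S" and "p N = T"
    and "\<And>k i. k < N \<Longrightarrow> p k $ i + 1 / real m \<le> p (Suc k) $ i"
    and "\<And>k. k < N \<Longrightarrow> norm (p (Suc k) - p k) \<le> 2 * (1 + real CARD('d)) / (\<eta> * \<delta>) / real m"
    and "\<And>k. k \<le> N \<Longrightarrow> \<exists>s\<in>{0..1}. norm (p k - \<sigma> s) \<le> \<eta> * real CARD('d)"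
proof -
  define N where "N = nat \<lfloor>real m * \<eta> * \<delta>\<rfloor>"
  have "1 \<le> \<lfloor>real m * \<eta> * \<delta>\<rfloor>"
    using m by (simp add: le_floor_iff)
  moreover have "real N = of_int \<lfloor>real m * \<eta> * \<delta>\<rfloor>"
    using calculation by (simp add: N_def)
  ultimately have N_le: "real N \<le> real m * \<eta> * \<delta>" and N_ge: "real m * \<eta> * \<delta> / 2 \<le> real N"
    using real_of_int_floor_gt_diff_one[of "real m * \<eta> * \<delta>"] by linarith+
  have N: "0 < N" and m_pos: "0 < real m"
    using m N_ge by (auto intro: Nat.gr0I)
  obtain p where "p 0 = S" "p N = T"
    and p_incr: "\<And>k i. k < N \<Longrightarrow> p k $ i + \<eta> * \<delta> / real N \<le> p (Suc k) $ i"
    and p_jump: "\<And>k. k < N \<Longrightarrow> norm (p (Suc k) - p k) \<le> (1 + real CARD('d)) / real N"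
    and "\<And>k. k \<le> N \<Longrightarrow> \<exists>s\<in>{0..1}. norm (p k - \<sigma> s) \<le> \<eta> * real CARD('d)"
    using monotone_path_staircase[OF \<sigma> gap less_imp_le[OF \<eta>(1)] \<eta>(2) N] by blast
  moreover have "p k $ i + 1 / real m \<le> p (Suc k) $ i" if "k < N" for k i
  proof -
    have "1 / real m \<le> \<eta> * \<delta> / real N"
      using N_le N m_pos by (simp add: field_simps)
    then show ?thesis
      using p_incr[OF that, of i] by linarith
  qed
  moreover have "norm (p (Suc k) - p k) \<le> 2 * (1 + real CARD('d)) / (\<eta> * \<delta>) / real m"
    if "k < N" for k
  proof -
    have "1 / real N \<le> 2 / (real m * \<eta> * \<delta>)"
      using N_ge N m_pos \<eta> \<delta> by (simp add: field_simps)
    then have "(1 + real CARD('d)) * (1 / real N) \<le> (1 + real CARD('d)) * (2 / (real m * \<eta> * \<delta>))"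
      by (intro mult_left_mono) auto
    then show ?thesis
      using p_jump[OF that] by (simp add: mult.commute mult.left_commute)
  qed
  ultimately show ?thesis
    using that N by blast
qed

lemma covering_grid_tube_path:
  fixes \<sigma> :: "real \<Rightarrow> real^'d"
  assumes \<sigma>: "\<sigma> \<in> paths_ST S T" "monotone_path \<sigma>"
    and gap: "\<And>i. \<delta>' \<le> T $ i - S $ i" and \<delta>': "0 < \<delta>'" and \<delta>: "0 < \<delta>"
  obtains C m0 where "0 < C" and "1 \<le> m0"
    and "\<And>m V. m0 \<le> m \<Longrightarrow> covers_grid m V \<Longrightarrow> \<exists>vs. graph_monotone_path (V \<union> {S, T}) (C / real m) S T vs
           \<and> polyline_image vs \<subseteq> tube \<delta> \<sigma> \<inter> unit_cube"
proof -
  define d where "d = real CARD('d)"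
  have d: "1 \<le> d"
    using card_ge_0_finite[of "UNIV :: 'd set"] by (simp add: d_def)
  \<comment> \<open>The staircase stays \<open>\<delta> / 3\<close>-close to \<open>\<sigma>\<close>; for \<open>m \<ge> m0\<close> its steps are at least \<open>1 / m\<close>, and
    snapping errors plus edge lengths stay below another \<open>\<delta> / 3\<close>.\<close>
  define \<eta> where "\<eta> = min 1 (\<delta> / (3 * d))"
  have \<eta>: "0 < \<eta>" "\<eta> \<le> 1" "\<eta> * d \<le> \<delta> / 3"
    using \<delta> d by (auto simp: \<eta>_def min_def field_simps)
  define K where "K = 2 * (1 + d) / (\<eta> * \<delta>')"
  define m0 where "m0 = nat \<lceil>max (1 / (\<eta> * \<delta>')) (3 * (K + 3 * d) / \<delta>)\<rceil> + 1"
  have "\<exists>vs. graph_monotone_path (V \<union> {S, T}) ((K + 2 * d) / real m) S T vs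
      \<and> polyline_image vs \<subseteq> tube \<delta> \<sigma> \<inter> unit_cube"
    if "m0 \<le> m" and cover: "covers_grid m V" for m V
  proof -
    have m_large: "1 / (\<eta> * \<delta>') < real m" "3 * (K + 3 * d) / \<delta> < real m"
      using \<open>m0 \<le> m\<close> by (simp_all add: m0_def) linarith+
    then have "1 < real m * \<eta> * \<delta>'"
      using \<eta> \<delta>' by (simp add: field_simps)
    then obtain N p where N: "0 < N" and p0: "p 0 = S" and pN: "p N = T"
      and step: "\<And>k i. k < N \<Longrightarrow> p k $ i + 1 / real m \<le> p (Suc k) $ i"
      and jump: "\<And>k. k < N \<Longrightarrow> norm (p (Suc k) - p k) \<le> K / real m"
      and near: "\<And>k. k \<le> N \<Longrightarrow> \<exists>s\<in>{0..1}. norm (p k - \<sigma> s) \<le> \<eta> * d"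
      using monotone_path_grid_staircase[OF \<sigma> gap \<delta>' \<eta>(1,2)] unfolding K_def d_def by blast
    have m_pos: "0 < real m"
      using m_large(1) \<eta> \<delta>' by (smt (verit) divide_pos_pos mult_pos_pos)
    have small: "\<eta> * d + K / real m + 3 * d / real m < \<delta>"
    proof -
      have "(K + 3 * d) / real m < \<delta> / 3"
        using m_large(2) m_pos \<delta> by (simp add: field_simps)
      then show ?thesis
        using \<eta>(3) \<delta> unfolding add_divide_distrib by linarith
    qed
    have "K / real m + 2 * d / real m = (K + 2 * d) / real m"
      by (simp add: add_divide_distrib)
    then show ?thesis
      using staircase_grid_tube_path[where p = p, OF _ N cover _ _ p0 pN step jump
          near[unfolded d_def] small[unfolded d_def]]
        m_pos paths_ST_endpoints[OF \<sigma>(1)] unfolding d_def by simp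
  qed
  moreover have "0 < K + 2 * d"
    using d \<eta> \<delta>' by (simp add: K_def add_pos_nonneg)
  ultimately show ?thesis
    using that[of "K + 2 * d" m0] by (simp add: m0_def)
qed

lemma random_graph_tube_path:
  fixes \<sigma> :: "real \<Rightarrow> real^'d" and f :: "nat \<Rightarrow> real"
  assumes \<sigma>: "\<sigma> \<in> paths_ST S T" "monotone_path \<sigma>"
    and gap: "\<And>i. \<delta>' \<le> T $ i - S $ i" and \<delta>': "0 < \<delta>'" and \<delta>: "0 < \<delta>"
    and f: "filterlim f at_top sequentially"
  obtains E :: "nat \<Rightarrow> (nat \<Rightarrow> real^'d) set" where "\<And>n. E n \<in> sets (sample_space n)"
    and "\<And>n \<omega>. \<omega> \<in> E n \<Longrightarrow> \<exists>vs. graph_monotone_path (\<omega> ` {..<n} \<union> {S, T})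
           (f n * (ln (real n) / real n) powr (1 / real CARD('d))) S T vs \<and>
         polyline_image vs \<subseteq> tube \<delta> \<sigma> \<inter> unit_cube"
    and "(\<lambda>n. measure (sample_space n) (E n)) \<longlonglongrightarrow> 1"
proof -
  define r where "r n = f n * (ln (real n) / real n) powr (1 / real CARD('d))" for n
  obtain C m0 where C: "0 < C" and m0: "1 \<le> m0"
    and grid_path: "\<And>m V. m0 \<le> m \<Longrightarrow> covers_grid m V \<Longrightarrow>
      \<exists>vs. graph_monotone_path (V \<union> {S, T}) (C / real m) S T vs
           \<and> polyline_image vs \<subseteq> tube \<delta> \<sigma> \<inter> unit_cube"
    using covering_grid_tube_path[OF \<sigma> gap \<delta>' \<delta>] by metis
  obtain m :: "nat \<Rightarrow> nat" where "\<forall>\<^sub>F n in sequentially.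
      m0 \<le> m n \<and> C / real (m n) \<le> r n \<and> 2 * ln (real n) \<le> real n / real (m n) ^ CARD('d)"
    using exists_grid_resolution[OF C m0 _ f, of "CARD('d)"] unfolding r_def by auto
  moreover define good where "good n \<longleftrightarrow>
      m0 \<le> m n \<and> C / real (m n) \<le> r n \<and> 2 * ln (real n) \<le> real n / real (m n) ^ CARD('d)" for n
  ultimately have eventually_good: "\<forall>\<^sub>F n in sequentially. good n"
    by simp
  define E :: "nat \<Rightarrow> (nat \<Rightarrow> real^'d) set"
    where "E n = (if good n then grid_covering_event n (m n) else {})" for n
  have "\<exists>vs. graph_monotone_path (\<omega> ` {..<n} \<union> {S, T}) (r n) S T vs \<and>
      polyline_image vs \<subseteq> tube \<delta> \<sigma> \<inter> unit_cube" if "\<omega> \<in> E n" for n \<omega>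
  proof -
    have "good n" and "covers_grid (m n) (\<omega> ` {..<n})"
      using that by (auto simp: E_def grid_covering_event_def split: if_splits)
    then show ?thesis
      using grid_path graph_monotone_path_mono unfolding good_def by meson
  qed
  moreover have "E n \<in> sets (sample_space n)" for n
    by (simp add: E_def sets_grid_covering_event)
  moreover have "(\<lambda>n. measure (sample_space n) (E n)) \<longlonglongrightarrow> 1"
  proof (rule Lim_transform_eventually)
    show "(\<lambda>n. measure (sample_space n) (grid_covering_event n (m n) :: (nat \<Rightarrow> real^'d) set)) \<longlonglongrightarrow> 1"
      using eventually_good m0 by (intro measure_grid_covering_event_tendsto_1)
        (auto simp: good_def elim: eventually_mono)
    show "\<forall>\<^sub>F n in sequentially.
        measure (sample_space n) (grid_covering_event n (m n) :: (nat \<Rightarrow> real^'d) set)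
        = measure (sample_space n) (E n)"
      using eventually_good by eventually_elim (simp add: E_def)
  qed
  ultimately show ?thesis
    using that unfolding r_def by blast
qed

lemma robust_monotone_path_random_graph:
  fixes \<sigma> :: "real \<Rightarrow> real^'d" and f :: "nat \<Rightarrow> real"
  assumes robust: "robust_path M S T \<sigma>" and mono: "monotone_path \<sigma>"
    and gap: "\<And>i. \<delta>' \<le> T $ i - S $ i" and \<delta>': "0 < \<delta>'"
    and f: "filterlim f at_top sequentially" and \<epsilon>: "0 < \<epsilon>"
  shows "\<exists>E :: nat \<Rightarrow> (nat \<Rightarrow> real^'d) set. (\<forall>n. E n \<in> sets (sample_space n) \<and>
           (\<forall>\<omega>\<in>E n. \<exists>vs. graph_monotone_path (\<omega> ` {..<n} \<union> {S, T})
              (f n * (ln (real n) / real n) powr (1 / real CARD('d))) S T vs \<and>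
            set_cost M (polyline_image vs) \<le> ereal (1 + \<epsilon>) * path_cost M \<sigma>))
         \<and> (\<lambda>n. measure (sample_space n) (E n)) \<longlonglongrightarrow> 1"
proof -
  have \<sigma>: "\<sigma> \<in> paths_ST S T"
    using robust by (simp add: robust_path_def)
  obtain \<delta> where \<delta>: "0 < \<delta>" and tube_cost: "\<forall>\<sigma>'\<in>paths_ST S T. \<sigma>' ` {0..1} \<subseteq> tube \<delta> \<sigma> \<longrightarrow>
      path_cost M \<sigma>' \<le> ereal (1 + \<epsilon>) * path_cost M \<sigma>"
    using robust \<epsilon> unfolding robust_path_def by blast
  obtain E :: "nat \<Rightarrow> (nat \<Rightarrow> real^'d) set" where sets: "\<And>n. E n \<in> sets (sample_space n)"
    and paths: "\<And>n \<omega>. \<omega> \<in> E n \<Longrightarrow> \<exists>vs. graph_monotone_path (\<omega> ` {..<n} \<union> {S, T})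
           (f n * (ln (real n) / real n) powr (1 / real CARD('d))) S T vs \<and>
         polyline_image vs \<subseteq> tube \<delta> \<sigma> \<inter> unit_cube"
    and lim: "(\<lambda>n. measure (sample_space n) (E n)) \<longlonglongrightarrow> 1"
    by (fact random_graph_tube_path[OF \<sigma> mono gap \<delta>' \<delta> f])
  show ?thesis
  proof (intro exI[of _ E] conjI allI ballI sets lim)
    fix n \<omega> assume "\<omega> \<in> E n"
    then obtain vs where vs: "graph_monotone_path (\<omega> ` {..<n} \<union> {S, T})
        (f n * (ln (real n) / real n) powr (1 / real CARD('d))) S T vs"
      and "polyline_image vs \<subseteq> tube \<delta> \<sigma> \<inter> unit_cube"
      using paths by blast
    then have "set_cost M (polyline_image vs) \<le> ereal (1 + \<epsilon>) * path_cost M \<sigma>"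
      by (intro set_cost_polyline_le[OF tube_cost]) (auto simp: graph_monotone_path_def)
    with vs show "\<exists>vs. graph_monotone_path (\<omega> ` {..<n} \<union> {S, T})
        (f n * (ln (real n) / real n) powr (1 / real CARD('d))) S T vs \<and>
      set_cost M (polyline_image vs) \<le> ereal (1 + \<epsilon>) * path_cost M \<sigma>"
      by blast
  qed
qed

theorem theorem6:
  fixes M :: "real ^ 'd \<Rightarrow> real"
    and S T :: "real ^ 'd"
    and \<delta>'' :: real
    and \<sigma>_star :: "real \<Rightarrow> real ^ 'd"
    and f :: "nat \<Rightarrow> real"
  assumes d2: "CARD('d) \<ge> 2"
    and S_in: "S \<in> unit_cube" and T_in: "T \<in> unit_cube"
    and \<delta>_pos: "0 < \<delta>''" and \<delta>_le: "\<delta>'' \<le> 1"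
    and ST: "prec_delta \<delta>'' S T"
    and opt: "robustly_optimal_monotone M S T \<sigma>_star"
    and f_lim: "filterlim f at_top sequentially"
  shows "\<forall>\<epsilon>>0. \<exists>E :: nat \<Rightarrow> (nat \<Rightarrow> real ^ 'd) set.
           (\<forall>n. E n \<in> sets (sample_space n) \<and>
              (\<forall>\<omega>\<in>E n. \<exists>vs. graph_monotone_path
                   (\<omega> ` {..<n} \<union> {S, T})
                   (f n * (ln (real n) / real n) powr (1 / real CARD('d))) S T vs
                 \<and> set_cost M (polyline_image vs) \<le> ereal (1 + \<epsilon>) * path_cost M \<sigma>_star))
           \<and> (\<lambda>n. measure (sample_space n) (E n)) \<longlonglongrightarrow> 1"
proof (intro allI impI robust_monotone_path_random_graph)
  show "robust_path M S T \<sigma>_star" and "monotone_path \<sigma>_star"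
    using opt by (simp_all add: robustly_optimal_monotone_def)
  show "\<delta>'' \<le> T $ i - S $ i" for i
    using ST Min_le[of "range (\<lambda>i. T $ i - S $ i)"] by (simp add: prec_delta_def)
qed (use \<delta>_pos f_lim in auto)

end
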